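(* Suppose $F\in\mathcal A$. Then for every $z\in\mathbb C$, each connected component of the slice $\Omega_z$ is simply connected.
   Context: Let $F(z,w)=(P(z),Q(z,w))$ be a polynomial skew product of $\mathbb C^2$. Let $U=\{z\in\mathbb C: P^n(z)\to 0\}$ be the basin of attraction of $0$ for $P$, let $\Omega=\{(z,w)\in\mathbb C^2: F^n(z,w)\to(0,0)\}$ be the basin of attraction of $(0,0)$ for $F$, and for $z\in\mathbb C$ let $\Omega_z=\{w\in\mathbb C:(z,w)\in\Omega\}$ be the slice of $\Omega$ over $z$. We say $F$ belongs to the class $\mathcal A$ if: (i) $P$ is a polynomial of degree $d\ge 2$ with $P(0)=0$ and $0<|P'(0)|=a<1$; (ii) writing $Q(z,w)=\sum_{j=0}^d Q_j(w)z^j$ with polynomials $Q_j$, we have $\deg Q_j\le d-1$ for all $j\ge 1$, $Q_0(w)=Q(0,w)$ has degree exactly $d$, $Q_0(0)=0$, $0<|Q_0'(0)|=b<1$, $a<b$, and $\frac{\partial Q}{\partial z}(0,0)=0$ (so $(0,0)$ is an attracting fixed point of $F$); (iii) condition $\mathcal C$ holds: (C1) for every $z\in\partial U$ there is no $w$ with $(z,w)\in\overline{\Omega}$ and $\frac{\partial Q}{\partial w}(z,w)=0$; (C2) if $w\notin\Omega_0$ and $\frac{\partial Q}{\partial w}(0,w)=0$, then $w$ lies in the basin of infinity of $Q_0$ (i.e. $Q_0^n(w)\to\infty$); (C3) if $w\in\Omega_0$ and $\frac{\partial Q}{\partial w}(0,w)=0$, then $F^n(0,w)\neq(0,0)$ for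 all integers $n\ge1$; (C4) if $z\in U$ and $P'(z)=0$, then $P^n(z)\ne 0$ for all integers $n\ge 1$. *)

theory Defs
  imports "HOL-Analysis.Analysis" "HOL-Computational_Algebra.Polynomial"
begin

text \<open>A polynomial skew product F(z,w) = (P(z), Q(z,w)) with
  Q(z,w) = sum_{j=0}^d Q_j(w) z^j, d = degree P.  Q is given by the
  family of one-variable polynomials Qs j = Q_j.\<close>

definition skewQ :: "complex poly \<Rightarrow> (nat \<Rightarrow> complex poly) \<Rightarrow> complex \<Rightarrow> complex \<Rightarrow> complex" where
  "skewQ P Qs z w = (\<Sum>j\<le>degree P. poly (Qs j) w * z ^ j)"

definition skewQ_dw :: "complex poly \<Rightarrow> (nat \<Rightarrow> complex poly) \<Rightarrow> complex \<Rightarrow> complex \<Rightarrow> complex" where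
  "skewQ_dw P Qs z w = (\<Sum>j\<le>degree P. poly (pderiv (Qs j)) w * z ^ j)"

definition skewF :: "complex poly \<Rightarrow> (nat \<Rightarrow> complex poly) \<Rightarrow> complex \<times> complex \<Rightarrow> complex \<times> complex" where
  "skewF P Qs = (\<lambda>(z, w). (poly P z, skewQ P Qs z w))"

definition basinU :: "complex poly \<Rightarrow> complex set" where
  "basinU P = {z. (\<lambda>n. (poly P ^^ n) z) \<longlonglongrightarrow> 0}"

definition basinOmega :: "complex poly \<Rightarrow> (nat \<Rightarrow> complex poly) \<Rightarrow> (complex \<times> complex) set" where
  "basinOmega P Qs = {p. (\<lambda>n. (skewF P Qs ^^ n) p) \<longlonglongrightarrow> (0, 0)}"

definition slice :: "complex poly \<Rightarrow> (nat \<Rightarrow> complex poly) \<Rightarrow> complex \<Rightarrow> complex set" where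
  "slice P Qs z = {w. (z, w) \<in> basinOmega P Qs}"

definition classA :: "complex poly \<Rightarrow> (nat \<Rightarrow> complex poly) \<Rightarrow> bool" where
  "classA P Qs \<longleftrightarrow>
     (let d = degree P; a = cmod (poly (pderiv P) 0); b = cmod (poly (pderiv (Qs 0)) 0) in
      d \<ge> 2 \<and> poly P 0 = 0 \<and> 0 < a \<and> a < 1 \<and>
      (\<forall>j. 1 \<le> j \<and> j \<le> d \<longrightarrow> degree (Qs j) \<le> d - 1) \<and>
      degree (Qs 0) = d \<and> poly (Qs 0) 0 = 0 \<and> 0 < b \<and> b < 1 \<and> a < b \<and>
      poly (Qs 1) 0 = 0 \<and>
      \<comment> \<open>C1\<close>
      (\<forall>z\<in>frontier (basinU P). \<not> (\<exists>w. (z, w) \<in> closure (basinOmega P Qs) \<and> skewQ_dw P Qs z w = 0)) \<and>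
      \<comment> \<open>C2\<close>
      (\<forall>w. w \<notin> slice P Qs 0 \<and> skewQ_dw P Qs 0 w = 0 \<longrightarrow>
          filterlim (\<lambda>n. (poly (Qs 0) ^^ n) w) at_infinity sequentially) \<and>
      \<comment> \<open>C3\<close>
      (\<forall>w. w \<in> slice P Qs 0 \<and> skewQ_dw P Qs 0 w = 0 \<longrightarrow>
          (\<forall>n\<ge>1. (skewF P Qs ^^ n) (0, w) \<noteq> (0, 0))) \<and>
      \<comment> \<open>C4\<close>
      (\<forall>z. z \<in> basinU P \<and> poly (pderiv P) z = 0 \<longrightarrow> (\<forall>n\<ge>1. (poly P ^^ n) z \<noteq> 0)))"

end

theory Submission
  imports Defs "HOL-Complex_Analysis.Complex_Analysis"
begin

text \<open>
  Near the attracting fixed point the derivative of \<open>F\<close> is \<open>diag(P'(0), Q\<^sub>0'(0))\<close>, of norm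
  \<open>b < 1\<close>, so \<open>F\<close> contracts a ball \<open>B\<close> around the origin and \<open>\<Omega>\<close> is the increasing union of the
  open sets \<open>F\<^sup>-\<^sup>n(B)\<close>. Over a fixed \<open>z\<close> the first coordinate of \<open>F\<^sup>n(z, w)\<close> does not depend on
  \<open>w\<close> and the second is an entire function of \<open>w\<close>. A loop in a component of \<open>\<Omega>\<^sub>z\<close> is compact,
  hence is mapped into \<open>B\<close> by a single iterate \<open>F\<^sup>N\<close>; by the maximum modulus principle so is
  every point it surrounds. Hence the inside of the loop lies in \<open>\<Omega>\<^sub>z\<close>, and then in the same
  component, so the loop winds around no point of the complement.
\<close>

lemma compact_subset_incseq_open_UN:
  assumes "compact K" "\<And>n. open (A n)" "incseq A" "K \<subseteq> (\<Union>n. A n)"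
  shows "\<exists>n. K \<subseteq> A n"
proof -
  have "K \<subseteq> \<Union> (A ` UNIV)"
    using assms(4) by simp
  then obtain N where "finite N" "K \<subseteq> (\<Union>n\<in>N. A n)"
    using compactE_image[OF assms(1), of UNIV A] assms(2) by metis
  moreover have "A n \<subseteq> A (Max N)" if "n \<in> N" for n
    using \<open>incseq A\<close> \<open>finite N\<close> that by (simp add: incseq_def)
  ultimately show ?thesis by blast
qed

lemma inside_subset_component:
  fixes K :: "'a::{real_normed_vector, perfect_space} set"
  assumes "C \<in> components S" "K \<subseteq> C" "closed K" "connected K" "inside K \<subseteq> S"
  shows "inside K \<subseteq> C"
proof (cases "K = {}")
  case False
  have "K \<union> inside K \<subseteq> S"
    using assms in_components_subset by blast
  then have "K \<union> inside K \<subseteq> C"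
    using components_maximal[OF assms(1) connected_with_inside[OF assms(3,4)]] assms(2) False
    by blast
  then show ?thesis by blast
qed simp

lemma simply_connected_if_inside_loops_subset:
  fixes S :: "complex set"
  assumes "open S" "connected S"
    and inside_loops: "\<And>g. path g \<Longrightarrow> path_image g \<subseteq> S \<Longrightarrow> pathfinish g = pathstart g \<Longrightarrow>
                            inside (path_image g) \<subseteq> S"
  shows "simply_connected S"
  unfolding simply_connected_eq_winding_number_zero[OF \<open>open S\<close>]
proof (intro conjI allI impI \<open>connected S\<close>)
  fix g w
  assume g: "path g \<and> path_image g \<subseteq> S \<and> pathfinish g = pathstart g \<and> w \<notin> S"
  then have "w \<notin> inside (path_image g) \<union> path_image g"
    using inside_loops by blast
  then have "w \<in> outside (path_image g)"
    by (simp add: outside_inside)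
  then show "winding_number g w = 0"
    using g winding_number_zero_in_outside by blast
qed

lemma simply_connected_components_of_inside_closed_UN:
  fixes A :: "nat \<Rightarrow> complex set"
  assumes open_A: "\<And>n. open (A n)" and "incseq A"
    and inside_closed: "\<And>K n. compact K \<Longrightarrow> K \<subseteq> A n \<Longrightarrow> inside K \<subseteq> A n"
    and C: "C \<in> components (\<Union>n. A n)"
  shows "simply_connected C"
proof (rule simply_connected_if_inside_loops_subset)
  show "open C"
    using open_components[OF _ C] open_A by blast
  fix g
  assume g: "path g" "path_image g \<subseteq> C" "pathfinish g = pathstart g"
  then have "path_image g \<subseteq> (\<Union>n. A n)"
    using C in_components_subset by blast
  then obtain n where "path_image g \<subseteq> A n"
    using compact_subset_incseq_open_UN[OF compact_path_image[OF g(1)] open_A \<open>incseq A\<close>] by blast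
  then have "inside (path_image g) \<subseteq> (\<Union>n. A n)"
    using inside_closed[OF compact_path_image[OF g(1)]] by blast
  then show "inside (path_image g) \<subseteq> C"
    by (rule inside_subset_component[OF C g(2) closed_path_image[OF g(1)] connected_path_image[OF g(1)]])
qed (use C in_components_connected in auto)

lemma maximum_modulus_inside:
  assumes "compact K" "f holomorphic_on K \<union> inside K" "w \<in> inside K"
  obtains u where "u \<in> K" "norm (f w) \<le> norm (f u)"
proof -
  have "K \<noteq> {}"
    using assms(3) by auto
  moreover have "continuous_on K (\<lambda>v. norm (f v))"
    using assms(2) by (auto intro!: continuous_intros holomorphic_on_imp_continuous_on
                            elim: continuous_on_subset)
  ultimately obtain u where u: "u \<in> K" "\<And>v. v \<in> K \<Longrightarrow> norm (f v) \<le> norm (f u)"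
    using continuous_attains_sup[OF \<open>compact K\<close>] by blast
  have "closed K"
    using \<open>compact K\<close> by (rule compact_imp_closed)
  have frontier: "frontier (inside K) \<subseteq> K"
    using \<open>closed K\<close> by (rule frontier_inside_subset)
  have "norm (f w) \<le> norm (f u)"
  proof (rule maximum_modulus_frontier[where f = f and S = "inside K" and \<xi> = w])
    show "f holomorphic_on interior (inside K)"
      using assms(2) by (auto simp: interior_open open_inside[OF \<open>closed K\<close>]
                              elim: holomorphic_on_subset)
    have "closure (inside K) \<subseteq> K \<union> inside K"
      using frontier by (auto simp: closure_Un_frontier)
    then show "continuous_on (closure (inside K)) f"
      by (rule continuous_on_subset[OF holomorphic_on_imp_continuous_on[OF assms(2)]])
    show "bounded (inside K)"
      using \<open>compact K\<close> by (simp add: bounded_inside compact_imp_bounded)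
  qed (use frontier u assms(3) in auto)
  then show ?thesis
    using u(1) that by blast
qed

lemma norm_Pair_scale_le:
  fixes a b x y :: "'a::real_normed_div_algebra"
  assumes "norm a \<le> k" "norm b \<le> k"
  shows "norm (a * x, b * y) \<le> k * norm (x, y)"
proof -
  have "0 \<le> k"
    using assms(1) norm_ge_zero order_trans by blast
  have "(norm a * norm x)\<^sup>2 + (norm b * norm y)\<^sup>2 \<le> k\<^sup>2 * ((norm x)\<^sup>2 + (norm y)\<^sup>2)"
    using assms by (simp add: power_mult_distrib distrib_left add_mono mult_right_mono power_mono)
  then have "sqrt ((norm a * norm x)\<^sup>2 + (norm b * norm y)\<^sup>2) \<le> sqrt (k\<^sup>2 * ((norm x)\<^sup>2 + (norm y)\<^sup>2))"
    by (rule real_sqrt_le_mono)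
  then show ?thesis
    using \<open>0 \<le> k\<close> by (simp add: norm_Pair norm_mult real_sqrt_mult)
qed

lemma has_derivative_local_contraction:
  fixes F :: "'a::real_normed_vector \<Rightarrow> 'a"
  assumes deriv: "(F has_derivative L) (at 0)" and "F 0 = 0"
    and "b < 1" and L_bound: "\<And>h. norm (L h) \<le> b * norm h"
  obtains r c where "r > 0" "0 \<le> c" "c < 1" "\<And>p. norm p < r \<Longrightarrow> norm (F p) \<le> c * norm p"
proof -
  define e where "e = (1 - b) / 2"
  have "e > 0"
    using \<open>b < 1\<close> by (simp add: e_def)
  then obtain r where "r > 0" and r: "\<And>p. norm p < r \<Longrightarrow> norm (F p - L p) \<le> e * norm p"
    using deriv \<open>F 0 = 0\<close> by (fastforce simp: has_derivative_at_alt)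
  have "norm (F p) \<le> max 0 (b + e) * norm p" if "norm p < r" for p
  proof -
    have "norm (F p) \<le> norm (L p) + norm (F p - L p)"
      by (rule norm_triangle_sub)
    also have "\<dots> \<le> (b + e) * norm p"
      using L_bound[of p] r[OF that] by (simp add: distrib_right)
    also have "\<dots> \<le> max 0 (b + e) * norm p"
      by (intro mult_right_mono) simp_all
    finally show ?thesis .
  qed
  moreover have "max 0 (b + e) < 1"
    using \<open>b < 1\<close> by (simp add: e_def field_simps)
  ultimately show ?thesis
    using \<open>r > 0\<close> by (intro that[of r "max 0 (b + e)"]) auto
qed

lemma contraction_ball_attracting:
  fixes f :: "'a::real_normed_vector \<Rightarrow> 'a"
  assumes "0 \<le> c" "c < 1" and contr: "\<And>p. norm p < r \<Longrightarrow> norm (f p) \<le> c * norm p"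
  shows contraction_ball_invariant: "f ` ball 0 r \<subseteq> ball 0 r"
    and contraction_ball_tendsto: "p \<in> ball 0 r \<Longrightarrow> (\<lambda>n. (f ^^ n) p) \<longlonglongrightarrow> 0"
proof -
  show invariant: "f ` ball 0 r \<subseteq> ball 0 r"
  proof (rule image_subsetI)
    fix q :: 'a
    assume "q \<in> ball 0 r"
    then have "norm q < r" by simp
    moreover have "c * norm q \<le> norm q"
      using mult_left_le_one_le[of "norm q" c] assms(1,2) by simp
    ultimately show "f q \<in> ball 0 r"
      using contr[of q] by simp
  qed
  show "(\<lambda>n. (f ^^ n) p) \<longlonglongrightarrow> 0" if "p \<in> ball 0 r"
  proof -
    have orbit: "(f ^^ n) p \<in> ball 0 r" for n
    proof (induction n)
      case (Suc n)
      then show ?case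
        using subsetD[OF invariant imageI[OF Suc]] by simp
    qed (use that in simp)
    have bound: "norm ((f ^^ n) p) \<le> c ^ n * norm p" for n
    proof (induction n)
      case (Suc n)
      have "norm ((f ^^ Suc n) p) \<le> c * norm ((f ^^ n) p)"
        using contr[of "(f ^^ n) p"] orbit[of n] by simp
      also have "\<dots> \<le> c * (c ^ n * norm p)"
        using Suc.IH \<open>0 \<le> c\<close> by (rule mult_left_mono)
      finally show ?case by simp
    qed simp
    have "(\<lambda>n. c ^ n * norm p) \<longlonglongrightarrow> 0"
      using tendsto_mult[OF LIMSEQ_power_zero[of c] tendsto_const[of "norm p"]] assms(1,2) by simp
    then show ?thesis
      by (rule Lim_null_comparison[OF always_eventually[OF allI[OF bound]]])
  qed
qed

lemma basin_eq_UN_funpow_vimage: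
  fixes f :: "'a::topological_space \<Rightarrow> 'a"
  assumes "open V" "x0 \<in> V" and attracted: "\<And>p. p \<in> V \<Longrightarrow> (\<lambda>n. (f ^^ n) p) \<longlonglongrightarrow> x0"
  shows "{p. (\<lambda>n. (f ^^ n) p) \<longlonglongrightarrow> x0} = (\<Union>n. (f ^^ n) -` V)"
proof (intro equalityI subsetI)
  fix p
  assume "p \<in> {p. (\<lambda>n. (f ^^ n) p) \<longlonglongrightarrow> x0}"
  then have "eventually (\<lambda>n. (f ^^ n) p \<in> V) sequentially"
    using assms(1,2) by (auto intro: topological_tendstoD)
  then show "p \<in> (\<Union>n. (f ^^ n) -` V)"
    by (auto simp: eventually_sequentially)
next
  fix p
  assume "p \<in> (\<Union>n. (f ^^ n) -` V)"
  then obtain n where "(f ^^ n) p \<in> V" by blast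
  then have "(\<lambda>k. (f ^^ k) ((f ^^ n) p)) \<longlonglongrightarrow> x0"
    by (rule attracted)
  then have "(\<lambda>k. (f ^^ (k + n)) p) \<longlonglongrightarrow> x0"
    by (simp add: funpow_add)
  then show "p \<in> {p. (\<lambda>n. (f ^^ n) p) \<longlonglongrightarrow> x0}"
    by (simp add: LIMSEQ_offset)
qed

lemma incseq_funpow_vimage:
  assumes "f ` V \<subseteq> V"
  shows "incseq (\<lambda>n. (f ^^ n) -` V)"
  using assms by (intro incseq_SucI) auto

lemma has_derivative_poly_comp [derivative_intros]:
  fixes g :: "'a::real_normed_vector \<Rightarrow> 'b::real_normed_field"
  assumes "(g has_derivative g') (at x within S)"
  shows "((\<lambda>x. poly p (g x)) has_derivative (\<lambda>h. poly (pderiv p) (g x) * g' h)) (at x within S)"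
  using has_derivative_compose[OF assms poly_DERIV[unfolded has_field_derivative_def]] .

lemma skewQ_zero_left: "skewQ P Qs 0 w = poly (Qs 0) w"
proof -
  have "poly (Qs j) w * 0 ^ j = (if j = 0 then poly (Qs 0) w else 0)" for j :: nat
    by (cases j) simp_all
  then show ?thesis
    by (simp add: skewQ_def)
qed

lemma skewF_origin:
  assumes "poly P 0 = 0" "poly (Qs 0) 0 = 0"
  shows "skewF P Qs 0 = 0"
  using assms by (simp add: skewF_def zero_prod_def skewQ_zero_left)

lemma skewQ_has_derivative_origin:
  assumes "degree P \<ge> 1"
  shows "((\<lambda>p. skewQ P Qs (fst p) (snd p)) has_derivative
           (\<lambda>h. poly (Qs 1) 0 * fst h + poly (pderiv (Qs 0)) 0 * snd h)) (at (0, 0))"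
proof -
  have "((\<lambda>p. \<Sum>j\<le>degree P. poly (Qs j) (snd p) * fst p ^ j) has_derivative
      (\<lambda>h. \<Sum>j\<le>degree P. poly (pderiv (Qs j)) 0 * snd h * 0 ^ j
                            + poly (Qs j) 0 * (of_nat j * 0 ^ (j - 1) * fst h))) (at (0, 0))"
    by (auto intro!: derivative_eq_intros simp: algebra_simps)
  moreover have "(\<Sum>j\<le>degree P. poly (pderiv (Qs j)) 0 * y * 0 ^ j
                                + poly (Qs j) 0 * (of_nat j * 0 ^ (j - 1) * x))
      = poly (Qs 1) 0 * x + poly (pderiv (Qs 0)) 0 * y" for x y :: complex
  proof -
    have "poly (pderiv (Qs j)) 0 * y * 0 ^ j + poly (Qs j) 0 * (of_nat j * 0 ^ (j - 1) * x)
        = (if j = 0 then poly (pderiv (Qs 0)) 0 * y else 0) + (if j = 1 then poly (Qs 1) 0 * x else 0)"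
      for j
      by (cases j) (auto simp: power_0_left)
    then show ?thesis
      using assms by (simp add: sum.distrib)
  qed
  ultimately show ?thesis
    by (simp add: skewQ_def)
qed

lemma skewF_has_derivative_origin:
  assumes "degree P \<ge> 1" "poly (Qs 1) 0 = 0"
  shows "(skewF P Qs has_derivative
           (\<lambda>h. (poly (pderiv P) 0 * fst h, poly (pderiv (Qs 0)) 0 * snd h))) (at 0)"
proof -
  have "skewF P Qs = (\<lambda>p. (poly P (fst p), skewQ P Qs (fst p) (snd p)))"
    by (auto simp: skewF_def)
  then show ?thesis
    using skewQ_has_derivative_origin[OF assms(1), of Qs] assms(2)
    by (auto simp: zero_prod_def intro!: derivative_eq_intros)
qed

lemma classA_local_contraction:
  assumes "classA P Qs"
  obtains r c where "r > 0" "0 \<le> c" "c < 1"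
    "\<And>p. norm p < r \<Longrightarrow> norm (skewF P Qs p) \<le> c * norm p"
proof -
  define b where "b = cmod (poly (pderiv (Qs 0)) 0)"
  have A: "degree P \<ge> 1" "poly (Qs 1) 0 = 0" "poly P 0 = 0" "poly (Qs 0) 0 = 0"
    "cmod (poly (pderiv P) 0) \<le> b" "b < 1"
    using assms by (auto simp: classA_def Let_def b_def)
  have bound: "norm (poly (pderiv P) 0 * fst h, poly (pderiv (Qs 0)) 0 * snd h) \<le> b * norm h" for h
    using norm_Pair_scale_le[OF A(5), of "poly (pderiv (Qs 0)) 0" "fst h" "snd h"]
    by (simp add: b_def)
  show ?thesis
    using that by (rule has_derivative_local_contraction[OF
          skewF_has_derivative_origin[where P = P and Qs = Qs, OF A(1,2)]
          skewF_origin[where P = P and Qs = Qs, OF A(3,4)] A(6) bound])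
qed

lemma classA_basin_eq_UN_vimage_ball:
  assumes "classA P Qs"
  obtains r where "skewF P Qs ` ball 0 r \<subseteq> ball 0 r"
    "basinOmega P Qs = (\<Union>n. (skewF P Qs ^^ n) -` ball 0 r)"
proof -
  obtain r c where "r > 0" "0 \<le> c" "c < 1"
    and contr: "\<And>p. norm p < r \<Longrightarrow> norm (skewF P Qs p) \<le> c * norm p"
    using classA_local_contraction[OF assms] by blast
  have "basinOmega P Qs = (\<Union>n. (skewF P Qs ^^ n) -` ball 0 r)"
    unfolding basinOmega_def zero_prod_def[symmetric]
    using \<open>r > 0\<close> contraction_ball_tendsto[OF \<open>0 \<le> c\<close> \<open>c < 1\<close> contr]
    by (intro basin_eq_UN_funpow_vimage) auto
  with contraction_ball_invariant[OF \<open>0 \<le> c\<close> \<open>c < 1\<close> contr] show ?thesis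
    by (rule that)
qed

lemma skewF_Pair: "skewF P Qs (z, w) = (poly P z, skewQ P Qs z w)"
  by (simp add: skewF_def)

lemma fst_skewF_funpow: "fst ((skewF P Qs ^^ n) (z, w)) = (poly P ^^ n) z"
  by (induction n) (auto simp: skewF_def split: prod.splits)

lemma skewF_funpow_fibre:
  "(skewF P Qs ^^ n) (z, w) = ((poly P ^^ n) z, snd ((skewF P Qs ^^ n) (z, w)))"
  by (metis fst_skewF_funpow prod.collapse)

lemma snd_skewF_funpow_holomorphic: "(\<lambda>w. snd ((skewF P Qs ^^ n) (z, w))) holomorphic_on S"
proof (induction n arbitrary: S)
  case (Suc n)
  have "snd ((skewF P Qs ^^ Suc n) (z, w)) = skewQ P Qs ((poly P ^^ n) z) (snd ((skewF P Qs ^^ n) (z, w)))"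
    for w
  proof -
    obtain y where "(skewF P Qs ^^ n) (z, w) = ((poly P ^^ n) z, y)"
      by (metis skewF_funpow_fibre)
    then show ?thesis
      by (simp add: skewF_Pair)
  qed
  then show ?case
    unfolding skewQ_def using Suc.IH by (auto intro!: holomorphic_intros)
qed simp

lemma continuous_on_skewF_funpow_fibre: "continuous_on S (\<lambda>w. (skewF P Qs ^^ n) (z, w))"
  by (subst skewF_funpow_fibre)
    (intro continuous_on_Pair continuous_on_const holomorphic_on_imp_continuous_on
      snd_skewF_funpow_holomorphic)

lemma inside_subset_fibre_vimage_ball:
  assumes "compact K" "K \<subseteq> {w. (skewF P Qs ^^ n) (z, w) \<in> ball 0 r}"
  shows "inside K \<subseteq> {w. (skewF P Qs ^^ n) (z, w) \<in> ball 0 r}"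
proof
  fix w
  assume "w \<in> inside K"
  define f where "f w = snd ((skewF P Qs ^^ n) (z, w))" for w
  obtain u where "u \<in> K" "norm (f w) \<le> norm (f u)"
    using maximum_modulus_inside[OF \<open>compact K\<close> _ \<open>w \<in> inside K\<close>]
      snd_skewF_funpow_holomorphic unfolding f_def by blast
  have fibre: "(skewF P Qs ^^ n) (z, v) = ((poly P ^^ n) z, f v)" for v
    unfolding f_def by (rule skewF_funpow_fibre)
  have "norm ((poly P ^^ n) z, f w) \<le> norm ((poly P ^^ n) z, f u)"
    using \<open>norm (f w) \<le> norm (f u)\<close> by (simp add: norm_Pair power_mono)
  with \<open>u \<in> K\<close> assms(2) show "w \<in> {w. (skewF P Qs ^^ n) (z, w) \<in> ball 0 r}"
    by (auto simp: fibre)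
qed

lemma classA_slice_inside_closed_exhaustion:
  assumes "classA P Qs"
  obtains A where "slice P Qs z = (\<Union>n. A n)" "\<And>n. open (A n)" "incseq A"
    "\<And>K n. compact K \<Longrightarrow> K \<subseteq> A n \<Longrightarrow> inside K \<subseteq> A n"
proof -
  obtain r where invariant: "skewF P Qs ` ball 0 r \<subseteq> ball 0 r"
    and basin: "basinOmega P Qs = (\<Union>n. (skewF P Qs ^^ n) -` ball 0 r)"
    using classA_basin_eq_UN_vimage_ball[OF assms] .
  define A where "A n = {w. (skewF P Qs ^^ n) (z, w) \<in> ball 0 r}" for n
  have "slice P Qs z = (\<Union>n. A n)"
    by (auto simp: slice_def A_def basin)
  moreover have "open (A n)" for n
    unfolding A_def vimage_def[symmetric]
    by (rule open_vimage[OF open_ball continuous_on_skewF_funpow_fibre])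
  moreover have "incseq A"
  proof (rule monoI)
    show "A m \<subseteq> A n" if "m \<le> n" for m n
      using monoD[OF incseq_funpow_vimage[OF invariant] that] by (auto simp: A_def)
  qed
  moreover have "inside K \<subseteq> A n" if "compact K" "K \<subseteq> A n" for K n
    using inside_subset_fibre_vimage_ball[OF that[unfolded A_def]] by (simp add: A_def)
  ultimately show ?thesis
    using that by blast
qed

theorem lemma3p4:
  fixes P :: "complex poly" and Qs :: "nat \<Rightarrow> complex poly"
  assumes "classA P Qs"
  shows "\<forall>z. \<forall>C \<in> components (slice P Qs z). simply_connected C"
proof (intro allI ballI)
  fix z C
  assume "C \<in> components (slice P Qs z)"
  obtain A where "slice P Qs z = (\<Union>n. A n)" "\<And>n. open (A n)" "incseq A"
    "\<And>K n. compact K \<Longrightarrow> K \<subseteq> A n \<Longrightarrow> inside K \<subseteq> A n"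
    using classA_slice_inside_closed_exhaustion[OF assms] by blast
  with \<open>C \<in> components (slice P Qs z)\<close> show "simply_connected C"
    using simply_connected_components_of_inside_closed_UN by metis
qed

end
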